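(* Let $H$ be a finite-dimensional Hilbert space, let $C_1\subseteq H$ be a nonempty compact set and $C_2\subseteq H$ a nonempty closed set. For $i=1,2$, let $P_{C_i}:H\to C_i$ be a map such that $P_{C_i}(z)$ is a nearest point of $C_i$ to $z$ for every $z\in H$, and assume that $P_{C_2}$ is continuous. Let $x_0\in C_1$ and define sequences by $y_i=P_{C_2}(x_i)$ and $x_{i+1}=P_{C_1}(y_i)$ for $i=0,1,2,\ldots$. Then there exist $x\in C_1$ and $y=P_{C_2}(x)\in C_2$ such that $\|x-y\|=\lim_{i\to\infty}\|x_i-y_i\|$. *)

theory Defs
  imports "HOL-Analysis.Analysis"
begin

end

theory Submission
  imports Defs
begin

text \<open>Each half-step of the alternating projections can only shrink the gap
  \<open>dist (xs i) (ys i)\<close>, so the gaps form a decreasing sequence. Compactness of \<open>C1\<close>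
  gives a subsequence \<open>xs \<circ> r\<close> converging to some \<open>x \<in> C1\<close>; by continuity of \<open>P2\<close>
  the gaps along it tend to \<open>dist x (P2 x)\<close>, and a decreasing sequence has the
  limit of any of its subsequences.\<close>

definition nearest_point_map :: "'a::metric_space set \<Rightarrow> ('a \<Rightarrow> 'a) \<Rightarrow> bool" where
  "nearest_point_map C P \<longleftrightarrow> (\<forall>z. P z \<in> C \<and> (\<forall>c\<in>C. dist z (P z) \<le> dist z c))"

lemma nearest_point_mapD:
  assumes "nearest_point_map C P"
  shows "P z \<in> C" and "c \<in> C \<Longrightarrow> dist z (P z) \<le> dist z c"
  using assms by (auto simp: nearest_point_map_def)

lemma alternating_projections_mem:
  assumes "nearest_point_map C1 P1" and "xs 0 \<in> C1" and "\<And>i. xs (Suc i) = P1 (ys i)"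
  shows "xs i \<in> C1"
  using assms nearest_point_mapD(1) by (cases i) auto

lemma alternating_projections_gap_decseq:
  fixes xs ys :: "nat \<Rightarrow> 'a::metric_space"
  assumes P1: "nearest_point_map C1 P1" and P2: "nearest_point_map C2 P2"
    and "xs 0 \<in> C1"
    and ys: "\<And>i. ys i = P2 (xs i)"
    and xs: "\<And>i. xs (Suc i) = P1 (ys i)"
  shows "decseq (\<lambda>i. dist (xs i) (ys i))"
proof (rule decseq_SucI)
  fix i
  have "xs i \<in> C1"
    using alternating_projections_mem[OF P1 \<open>xs 0 \<in> C1\<close> xs] .
  have "dist (xs (Suc i)) (ys (Suc i)) \<le> dist (xs (Suc i)) (ys i)"
    using ys nearest_point_mapD[OF P2] by metis
  also have "\<dots> = dist (ys i) (P1 (ys i))"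
    by (simp add: xs dist_commute)
  also have "\<dots> \<le> dist (ys i) (xs i)"
    using nearest_point_mapD(2)[OF P1 \<open>xs i \<in> C1\<close>] .
  finally show "dist (xs (Suc i)) (ys (Suc i)) \<le> dist (xs i) (ys i)"
    by (simp add: dist_commute)
qed

lemma decseq_tendsto_subseq_limit:
  fixes d :: "nat \<Rightarrow> real"
  assumes "decseq d" and "strict_mono r" and "(d \<circ> r) \<longlonglongrightarrow> l"
  shows "d \<longlonglongrightarrow> l"
proof -
  have "l \<le> d n" for n
  proof -
    have "decseq (d \<circ> r)"
      using assms(1,2) by (simp add: decseq_def strict_mono_less_eq)
    then have "l \<le> d (r n)"
      using decseq_ge[OF _ assms(3)] by simp
    also have "\<dots> \<le> d n"
      using decseqD[OF assms(1) seq_suble[OF assms(2)]] .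
    finally show ?thesis .
  qed
  then obtain L where L: "d \<longlonglongrightarrow> L"
    using decseq_convergent[OF assms(1)] by blast
  then have "(d \<circ> r) \<longlonglongrightarrow> L"
    using assms(2) by (rule LIMSEQ_subseq_LIMSEQ)
  with assms(3) have "L = l"
    using LIMSEQ_unique by blast
  with L show ?thesis by simp
qed

theorem mainTheorem6:
  fixes C1 C2 :: "'a::euclidean_space set"
    and P1 P2 :: "'a \<Rightarrow> 'a"
    and xs ys :: "nat \<Rightarrow> 'a"
    and x0 :: 'a
  assumes "compact C1" and "C1 \<noteq> {}"
    and "closed C2" and "C2 \<noteq> {}"
    and "\<And>z. P1 z \<in> C1 \<and> (\<forall>c\<in>C1. dist z (P1 z) \<le> dist z c)"
    and "\<And>z. P2 z \<in> C2 \<and> (\<forall>c\<in>C2. dist z (P2 z) \<le> dist z c)"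
    and "continuous_on UNIV P2"
    and "x0 \<in> C1"
    and "xs 0 = x0"
    and "\<And>i. ys i = P2 (xs i)"
    and "\<And>i. xs (Suc i) = P1 (ys i)"
  shows "\<exists>x\<in>C1. \<exists>y. y = P2 x \<and> y \<in> C2 \<and>
           (\<lambda>i. norm (xs i - ys i)) \<longlonglongrightarrow> norm (x - y)"
proof -
  have P1: "nearest_point_map C1 P1" and P2: "nearest_point_map C2 P2"
    using assms(5,6) by (auto simp: nearest_point_map_def)
  define gap where "gap i = dist (xs i) (ys i)" for i
  have "decseq gap"
    unfolding gap_def
    using alternating_projections_gap_decseq[OF P1 P2] assms(8-11) by simp
  have "xs i \<in> C1" for i
    using alternating_projections_mem[OF P1] assms(8,9,11) by simp
  then obtain x r where "x \<in> C1" "strict_mono r" and xr: "(xs \<circ> r) \<longlonglongrightarrow> x"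
    using compact_imp_seq_compact[OF assms(1)] seq_compactE by metis
  have "(\<lambda>n. P2 ((xs \<circ> r) n)) \<longlonglongrightarrow> P2 x"
    using xr assms(7) continuous_on_tendsto_compose by fastforce
  then have "(gap \<circ> r) \<longlonglongrightarrow> dist x (P2 x)"
    using xr by (simp add: gap_def assms(10) o_def tendsto_dist)
  then have "gap \<longlonglongrightarrow> dist x (P2 x)"
    using decseq_tendsto_subseq_limit \<open>decseq gap\<close> \<open>strict_mono r\<close> by blast
  moreover have "gap = (\<lambda>i. norm (xs i - ys i))"
    by (simp add: gap_def dist_norm fun_eq_iff)
  ultimately show ?thesis
    using \<open>x \<in> C1\<close> nearest_point_mapD(1)[OF P2] by (auto simp: dist_norm)
qed

end
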